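(* Let $(X,d,f)$ be a dynamical system and $\mathcal{A}=\{\mathcal{U}_n\}_{n\in\mathbb{N}}$ a defining sequence of $X$, and let $\theta:X\to\varprojlim(\hookrightarrow,\mathcal{O}(\mathcal{U}_n))$ be given by $\theta(x)=\big((\mathcal{U}_n[f^i(x)])_{i\in\mathbb{N}}\big)_{n\in\mathbb{N}}$. (i) If $\mathcal{A}$ is complete, then $\theta$ is a homeomorphism onto $\varprojlim(\hookrightarrow,\mathcal{O}(\mathcal{U}_n))$. (ii) If $\mathcal{A}$ is complete and tame, then $f$ is uniformly continuous if and only if $\theta$ and $\theta^{-1}$ are uniformly continuous.
   Context: Spaces are nonempty separable metrizable; $d$ admissible, $f$ continuous. A partition is a cover by pairwise disjoint nonempty clopen sets; $\mathcal{U}[x]$ is the element containing $x$. A defining sequence is a sequence of partitions, each refining the previous, whose union is a basis; complete if nested $U_n\in\mathcal{U}_n$ have nonempty intersection; tame if $\sup\{\operatorname{diam}O:O\in\mathcal{U}_n\}\to0$ and each $\mathcal{U}_n$ is $\rho_n$-separated for some $\rho_n>0$. $\mathcal{O}(\mathcal{U})=\{(O_i)\in\mathcal{U}^{\mathbb{N}}:\forall k\ \exists x,\ f^i(x)\in O_i\ (0\le i\le k)\}$ with metric $1/(i+1)$ ($i$ least index of disagreement, $\mathcal{U}$ discrete). $\hookrightarrow:\mathcal{O}(\mathcal{U}_{n+1})\to\mathcal{O}(\mathcal{U}_n)$ sends $(O_i)$ to the unique $(V_i)\in\mathcal{U}_n^{\mathbb{N}}$ with $O_i\subseteq V_i$;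 the inverse limit is $\{(y_n)\in\prod_n\mathcal{O}(\mathcal{U}_n):y_n=\hookrightarrow(y_{n+1})\}$ with metric $d_\Pi((y_n),(z_n))=\max_n d(y_n,z_n)/(n+1)$. *)

theory Defs
  imports "HOL-Analysis.Analysis"
begin

definition clopen_in :: "'a set \<Rightarrow> ('a \<Rightarrow> 'a \<Rightarrow> real) \<Rightarrow> 'a set \<Rightarrow> bool" where
  "clopen_in X d W \<longleftrightarrow> openin (Metric_space.mtopology X d) W \<and> closedin (Metric_space.mtopology X d) W"

definition is_partition :: "'a set \<Rightarrow> ('a \<Rightarrow> 'a \<Rightarrow> real) \<Rightarrow> 'a set set \<Rightarrow> bool" where
  "is_partition X d P \<longleftrightarrow> \<Union>P = X \<and> (\<forall>W\<in>P. W \<noteq> {} \<and> clopen_in X d W) \<and>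
     (\<forall>W\<in>P. \<forall>W'\<in>P. W \<noteq> W' \<longrightarrow> W \<inter> W' = {})"

definition cell :: "'a set set \<Rightarrow> 'a \<Rightarrow> 'a set" where
  "cell P x = (THE W. W \<in> P \<and> x \<in> W)"

definition refines :: "'a set set \<Rightarrow> 'a set set \<Rightarrow> bool" where
  "refines P Q \<longleftrightarrow> (\<forall>W\<in>P. \<exists>V\<in>Q. W \<subseteq> V)"

definition is_basis_of :: "'a topology \<Rightarrow> 'a set set \<Rightarrow> bool" where
  "is_basis_of T B \<longleftrightarrow> (\<forall>W\<in>B. openin T W) \<and>
     (\<forall>W. openin T W \<longrightarrow> (\<exists>B'\<subseteq>B. \<Union>B' = W))"

definition defining_sequence :: "'a set \<Rightarrow> ('a \<Rightarrow> 'a \<Rightarrow> real) \<Rightarrow> (nat \<Rightarrow> 'a set set) \<Rightarrow> bool" where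
  "defining_sequence X d U \<longleftrightarrow> (\<forall>n. is_partition X d (U n)) \<and>
     (\<forall>n. refines (U (Suc n)) (U n)) \<and>
     is_basis_of (Metric_space.mtopology X d) (\<Union>n. U n)"

definition complete_defseq :: "(nat \<Rightarrow> 'a set set) \<Rightarrow> bool" where
  "complete_defseq U \<longleftrightarrow> (\<forall>V. (\<forall>n. V n \<in> U n) \<and> (\<forall>n. V (Suc n) \<subseteq> V n) \<longrightarrow> (\<Inter>n. V n) \<noteq> {})"

definition mdiam :: "('a \<Rightarrow> 'a \<Rightarrow> real) \<Rightarrow> 'a set \<Rightarrow> ereal" where
  "mdiam d S = Sup {ereal (d x y) | x y. x \<in> S \<and> y \<in> S}"

definition tame_defseq :: "('a \<Rightarrow> 'a \<Rightarrow> real) \<Rightarrow> (nat \<Rightarrow> 'a set set) \<Rightarrow> bool" where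
  "tame_defseq d U \<longleftrightarrow> ((\<lambda>n. Sup (mdiam d ` U n)) \<longlonglongrightarrow> 0) \<and>
     (\<forall>n. \<exists>\<rho>>0. \<forall>W\<in>U n. \<forall>W'\<in>U n. W \<noteq> W' \<longrightarrow> (\<forall>x\<in>W. \<forall>y\<in>W'. \<rho> \<le> d x y))"

definition orbs :: "'a set \<Rightarrow> ('a \<Rightarrow> 'a) \<Rightarrow> 'a set set \<Rightarrow> (nat \<Rightarrow> 'a set) set" where
  "orbs X f P = {s. (\<forall>i. s i \<in> P) \<and> (\<forall>k. \<exists>x\<in>X. \<forall>i\<le>k. (f ^^ i) x \<in> s i)}"

definition orbdist :: "(nat \<Rightarrow> 'a set) \<Rightarrow> (nat \<Rightarrow> 'a set) \<Rightarrow> real" where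
  "orbdist s t = (if s = t then 0 else 1 / (real (LEAST i. s i \<noteq> t i) + 1))"

definition hook :: "'a set set \<Rightarrow> (nat \<Rightarrow> 'a set) \<Rightarrow> (nat \<Rightarrow> 'a set)" where
  "hook Q s = (\<lambda>i. THE V. V \<in> Q \<and> s i \<subseteq> V)"

definition invlim :: "'a set \<Rightarrow> ('a \<Rightarrow> 'a) \<Rightarrow> (nat \<Rightarrow> 'a set set) \<Rightarrow> (nat \<Rightarrow> nat \<Rightarrow> 'a set) set" where
  "invlim X f U = {y. (\<forall>n. y n \<in> orbs X f (U n)) \<and> (\<forall>n. y n = hook (U n) (y (Suc n)))}"

text \<open>d_Pi(y,z) = max_n d(y_n,z_n)/(n+1) (the max exists; written as a Sup).\<close>
definition invlim_dist :: "(nat \<Rightarrow> nat \<Rightarrow> 'a set) \<Rightarrow> (nat \<Rightarrow> nat \<Rightarrow> 'a set) \<Rightarrow> real" where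
  "invlim_dist y z = (SUP n. orbdist (y n) (z n) / (real n + 1))"

definition theta :: "('a \<Rightarrow> 'a) \<Rightarrow> (nat \<Rightarrow> 'a set set) \<Rightarrow> 'a \<Rightarrow> (nat \<Rightarrow> nat \<Rightarrow> 'a set)" where
  "theta f U x = (\<lambda>n i. cell (U n) ((f ^^ i) x))"

end

theory Submission
  imports Defs
begin

text \<open>The coding map \<open>\<theta>\<close> records, at every level n, the cells of \<open>\<U>\<^sub>n\<close> visited by the
  orbit of x. It is injective and has a continuous inverse because the cells form a basis, and it
  is continuous because the iterates \<open>f\<^sup>i\<close> are continuous and the cells are open. Completeness
  gives surjectivity: the nested cells \<open>y\<^sub>n(0)\<close> of a point y of the inverse limit meet in some x,
  and since every finite window of \<open>y\<^sub>n\<close> is realised by an orbit starting in \<open>y\<^sub>n(0)\<close>, continuity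
  of \<open>f\<^sup>i\<close> forces \<open>f\<^sup>i(x) \<in> y\<^sub>m(i)\<close>. Under tameness, the separation of the cells of \<open>\<U>\<^sub>N\<close> turns uniform
  continuity of \<open>f\<^sup>0, \<dots>, f\<^sup>N\<close> into uniform agreement of the first N + 1 coordinates, and the
  shrinking diameters make \<open>\<theta>\<^sup>-\<^sup>1\<close> uniformly continuous; conversely \<open>f = \<theta>\<^sup>-\<^sup>1 \<circ> \<sigma> \<circ> \<theta>\<close>, where the
  shift \<open>\<sigma>\<close> is 2-Lipschitz for \<open>d\<^sub>\<Pi>\<close>.\<close>

section \<open>The metrics on orbit sequences and on the inverse limit\<close>

lemma orbdist_nonneg: "0 \<le> orbdist s t"
  by (simp add: orbdist_def)

lemma orbdist_le_1: "orbdist s t \<le> 1"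
  by (simp add: orbdist_def)

lemma orbdist_commute: "orbdist s t = orbdist t s"
  by (simp add: orbdist_def eq_commute)

lemma orbdist_eq_0_iff: "orbdist s t = 0 \<longleftrightarrow> s = t"
  by (simp add: orbdist_def)

lemma orbdist_first_difference:
  assumes "s \<noteq> t"
  obtains L where "orbdist s t = 1 / (real L + 1)" "s L \<noteq> t L" "\<And>i. i < L \<Longrightarrow> s i = t i"
proof -
  define L where "L = (LEAST i. s i \<noteq> t i)"
  have "\<exists>i. s i \<noteq> t i"
    using assms by auto
  then have "s L \<noteq> t L"
    unfolding L_def by (rule LeastI_ex)
  moreover have "\<And>i. i < L \<Longrightarrow> s i = t i"
    unfolding L_def using not_less_Least by blast
  moreover have "orbdist s t = 1 / (real L + 1)"
    using assms by (simp add: orbdist_def L_def)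
  ultimately show ?thesis
    using that by blast
qed

lemma orbdist_less_iff: "orbdist s t < 1 / (real k + 1) \<longleftrightarrow> (\<forall>i\<le>k. s i = t i)"
proof (cases "s = t")
  case False
  then obtain L where L: "orbdist s t = 1 / (real L + 1)" "s L \<noteq> t L" "\<And>i. i < L \<Longrightarrow> s i = t i"
    by (rule orbdist_first_difference) blast
  have "orbdist s t < 1 / (real k + 1) \<longleftrightarrow> k < L"
    by (simp add: L(1) divide_simps)
  also have "\<dots> \<longleftrightarrow> (\<forall>i\<le>k. s i = t i)"
    using L(2,3) le_less_trans not_le by blast
  finally show ?thesis .
qed (simp add: orbdist_def)

lemma orbdist_ultrametric: "orbdist s u \<le> max (orbdist s t) (orbdist t u)"
proof (cases "s = u")
  case True
  then show ?thesis
    using orbdist_nonneg[of s t] by (simp add: orbdist_def)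
next
  case False
  then obtain L where L: "orbdist s u = 1 / (real L + 1)" "s L \<noteq> u L"
    by (rule orbdist_first_difference)
  then have "\<not> (orbdist s t < 1 / (real L + 1) \<and> orbdist t u < 1 / (real L + 1))"
    unfolding orbdist_less_iff by auto
  then show ?thesis
    using L(1) by linarith
qed

lemma orbdist_triangle: "orbdist s u \<le> orbdist s t + orbdist t u"
  using orbdist_ultrametric[of s u t] orbdist_nonneg[of s t] orbdist_nonneg[of t u] by linarith

lemma orbdist_shift_le: "orbdist (\<lambda>i. s (Suc i)) (\<lambda>i. t (Suc i)) \<le> 2 * orbdist s t"
proof (cases "(\<lambda>i. s (Suc i)) = (\<lambda>i. t (Suc i))")
  case True
  then show ?thesis by (simp add: orbdist_def)
next
  case False
  then obtain L where L: "orbdist (\<lambda>i. s (Suc i)) (\<lambda>i. t (Suc i)) = 1 / (real L + 1)"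
      "s (Suc L) \<noteq> t (Suc L)"
    by (rule orbdist_first_difference)
  then have "\<not> orbdist s t < 1 / (real (Suc L) + 1)"
    unfolding orbdist_less_iff by blast
  moreover have "1 / (real L + 1) \<le> 2 * (1 / (real (Suc L) + 1))"
    by (simp add: field_simps)
  ultimately show ?thesis
    using L(1) by linarith
qed

lemma invlim_dist_component_le: "orbdist (y n) (z n) / (real n + 1) \<le> invlim_dist y z"
proof -
  have "orbdist (y m) (z m) / (real m + 1) \<le> 1" for m
    using orbdist_le_1[of "y m" "z m"] orbdist_nonneg[of "y m" "z m"]
    by (simp add: divide_le_eq)
  then show ?thesis
    unfolding invlim_dist_def by (intro cSUP_upper bdd_aboveI[of _ 1]) auto
qed

lemma invlim_dist_le:
  assumes "\<And>n. orbdist (y n) (z n) / (real n + 1) \<le> c"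
  shows "invlim_dist y z \<le> c"
  unfolding invlim_dist_def by (rule cSUP_least) (use assms in auto)

lemma Metric_space_invlim_dist: "Metric_space M invlim_dist"
proof
  fix y z w :: "nat \<Rightarrow> nat \<Rightarrow> 'a set"
  show "0 \<le> invlim_dist y z"
    using invlim_dist_component_le[of y 0 z] orbdist_nonneg[of "y 0" "z 0"] by simp
  show "invlim_dist y z = invlim_dist z y"
    by (simp add: invlim_dist_def orbdist_commute)
  show "invlim_dist y z = 0 \<longleftrightarrow> y = z"
  proof
    assume "invlim_dist y z = 0"
    then have "orbdist (y n) (z n) \<le> 0" for n
      using invlim_dist_component_le[of y n z] by (simp add: divide_le_0_iff)
    then show "y = z"
      using orbdist_nonneg orbdist_eq_0_iff by (metis order_antisym ext)
  next
    assume "y = z"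
    moreover have "invlim_dist z z \<le> 0"
      by (rule invlim_dist_le) (simp add: orbdist_def)
    ultimately show "invlim_dist y z = 0"
      using invlim_dist_component_le[of z 0 z] by (simp add: orbdist_def)
  qed
  show "invlim_dist y w \<le> invlim_dist y z + invlim_dist z w"
  proof (rule invlim_dist_le)
    fix n
    have "orbdist (y n) (w n) / (real n + 1)
        \<le> orbdist (y n) (z n) / (real n + 1) + orbdist (z n) (w n) / (real n + 1)"
      using orbdist_triangle[of "y n" "w n" "z n"]
      by (simp add: add_divide_distrib[symmetric] divide_right_mono)
    also have "\<dots> \<le> invlim_dist y z + invlim_dist z w"
      using invlim_dist_component_le[of y n z] invlim_dist_component_le[of z n w] by linarith
    finally show "orbdist (y n) (w n) / (real n + 1) \<le> invlim_dist y z + invlim_dist z w" .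
  qed
qed

lemma invlim_dist_less_imp_eq:
  assumes "invlim_dist y z < 1 / (real n + 1)"
  shows "y n 0 = z n 0"
proof -
  have "orbdist (y n) (z n) / (real n + 1) < 1 / (real n + 1)"
    using invlim_dist_component_le[of y n z] assms by linarith
  then have "orbdist (y n) (z n) < 1 / (real 0 + 1)"
    by (simp add: divide_less_cancel)
  then show ?thesis
    unfolding orbdist_less_iff by simp
qed

lemma invlim_dist_shift_le:
  "invlim_dist (\<lambda>n i. y n (Suc i)) (\<lambda>n i. z n (Suc i)) \<le> 2 * invlim_dist y z"
proof (rule invlim_dist_le)
  fix n
  let ?shifted = "orbdist (\<lambda>i. y n (Suc i)) (\<lambda>i. z n (Suc i))"
  have "?shifted / (real n + 1) \<le> 2 * (orbdist (y n) (z n) / (real n + 1))"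
    using orbdist_shift_le[of "y n" "z n"] by (simp add: divide_right_mono)
  also have "\<dots> \<le> 2 * invlim_dist y z"
    using invlim_dist_component_le[of y n z] by simp
  finally show "?shifted / (real n + 1) \<le> 2 * invlim_dist y z" .
qed

section \<open>Cells of a defining sequence\<close>

locale defseq_system = Metric_space X d for X :: "'a set" and d +
  fixes f :: "'a \<Rightarrow> 'a" and U :: "nat \<Rightarrow> 'a set set"
  assumes continuous_f: "continuous_map mtopology mtopology f"
    and defining_sequence: "defining_sequence X d U"
begin

lemma partition_U: "is_partition X d (U n)"
  using defining_sequence by (simp add: defining_sequence_def)

lemma cell_subset: "W \<in> U n \<Longrightarrow> W \<subseteq> X"
  using partition_U[of n] by (auto simp: is_partition_def)

lemma cell_nonempty: "W \<in> U n \<Longrightarrow> W \<noteq> {}"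
  using partition_U[of n] by (auto simp: is_partition_def)

lemma openin_cell: "W \<in> U n \<Longrightarrow> openin mtopology W"
  using partition_U[of n] by (auto simp: is_partition_def clopen_in_def)

lemma cells_eq_if_common_point:
  "W \<in> U n \<Longrightarrow> W' \<in> U n \<Longrightarrow> x \<in> W \<Longrightarrow> x \<in> W' \<Longrightarrow> W = W'"
  using partition_U[of n] by (auto simp: is_partition_def)

lemma cell_eq: "W \<in> U n \<Longrightarrow> x \<in> W \<Longrightarrow> cell (U n) x = W"
  unfolding cell_def by (rule the_equality) (use cells_eq_if_common_point in auto)

lemma cell_in_partition: "x \<in> X \<Longrightarrow> cell (U n) x \<in> U n"
  and mem_cell: "x \<in> X \<Longrightarrow> x \<in> cell (U n) x"
proof -
  assume "x \<in> X"
  then obtain W where "W \<in> U n" "x \<in> W"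
    using partition_U[of n] by (auto simp: is_partition_def)
  then show "cell (U n) x \<in> U n" "x \<in> cell (U n) x"
    using cell_eq by auto
qed

lemma cell_Suc_subset:
  assumes "x \<in> X"
  shows "cell (U (Suc n)) x \<subseteq> cell (U n) x"
proof -
  obtain V where "V \<in> U n" "cell (U (Suc n)) x \<subseteq> V"
    using defining_sequence cell_in_partition[OF assms]
    unfolding defining_sequence_def refines_def by blast
  then show ?thesis
    using cell_eq mem_cell[OF assms] by blast
qed

lemma cell_subset_cell:
  assumes "x \<in> X" "n \<le> m"
  shows "cell (U m) x \<subseteq> cell (U n) x"
  using assms(2)
proof (induction m rule: dec_induct)
  case (step m)
  then show ?case
    using cell_Suc_subset[OF assms(1), of m] by blast
qed simp

lemma the_coarser_cell_eq:
  assumes "W \<in> U (Suc n)" "x \<in> W"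
  shows "(THE V. V \<in> U n \<and> W \<subseteq> V) = cell (U n) x"
proof -
  have "x \<in> X" "W = cell (U (Suc n)) x"
    using assms cell_subset cell_eq by auto
  then show ?thesis
    using assms(2) cell_Suc_subset cell_in_partition cell_eq by (intro the_equality) auto
qed

lemma cell_eq_if_finer_cell_eq:
  assumes "x \<in> X" "y \<in> X" "n \<le> m" "cell (U m) x = cell (U m) y"
  shows "cell (U n) x = cell (U n) y"
proof -
  have "x \<in> cell (U n) y"
    using assms cell_subset_cell[of y n m] mem_cell[of x m] by auto
  then show ?thesis
    using cell_eq[OF cell_in_partition[OF assms(2)]] by simp
qed

lemma cell_subset_open:
  assumes "openin mtopology G" "x \<in> G"
  obtains n where "cell (U n) x \<subseteq> G"
proof -
  have "is_basis_of mtopology (\<Union>n. U n)"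
    using defining_sequence by (simp add: defining_sequence_def)
  then obtain B where B: "B \<subseteq> (\<Union>n. U n)" "\<Union>B = G"
    using assms(1) by (auto simp: is_basis_of_def)
  then obtain W n where "W \<in> B" "x \<in> W" "W \<in> U n"
    using assms(2) by auto
  then show ?thesis
    using that B cell_eq by blast
qed

lemma continuous_funpow: "continuous_map mtopology mtopology (f ^^ i)"
  by (induction i) (auto intro: continuous_map_compose[OF _ continuous_f, unfolded o_def])

lemma funpow_in_X: "x \<in> X \<Longrightarrow> (f ^^ i) x \<in> X"
  using continuous_funpow[of i] by (auto simp: continuous_map_def Pi_iff)

section \<open>The coding map\<close>

lemma theta_in_invlim:
  assumes "x \<in> X"
  shows "theta f U x \<in> invlim X f U"
proof -
  have "theta f U x n \<in> orbs X f (U n)" for n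
    unfolding orbs_def theta_def using assms
    by (auto intro!: bexI[of _ x] cell_in_partition mem_cell funpow_in_X)
  moreover have "theta f U x n = hook (U n) (theta f U x (Suc n))" for n
    unfolding hook_def theta_def
    using the_coarser_cell_eq[OF cell_in_partition mem_cell] funpow_in_X[OF assms] by simp
  ultimately show ?thesis
    unfolding invlim_def by blast
qed

lemma invlim_in_partition: "y \<in> invlim X f U \<Longrightarrow> y n i \<in> U n"
  unfolding invlim_def orbs_def by blast

lemma invlim_orbit:
  assumes "y \<in> invlim X f U"
  obtains x where "x \<in> X" "\<And>i. i \<le> k \<Longrightarrow> (f ^^ i) x \<in> y n i"
  using assms unfolding invlim_def orbs_def by blast

lemma invlim_Suc_subset:
  assumes "y \<in> invlim X f U"
  shows "y (Suc n) i \<subseteq> y n i"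
proof -
  have "y (Suc n) i \<noteq> {}"
    using cell_nonempty[OF invlim_in_partition[OF assms]] .
  then obtain x where x: "x \<in> y (Suc n) i"
    by blast
  have "y n = hook (U n) (y (Suc n))"
    using assms unfolding invlim_def by blast
  then have "y n i = hook (U n) (y (Suc n)) i"
    by (rule fun_cong)
  also have "\<dots> = cell (U n) x"
    unfolding hook_def using the_coarser_cell_eq[OF invlim_in_partition[OF assms] x] .
  moreover have "y (Suc n) i = cell (U (Suc n)) x"
    using cell_eq[OF invlim_in_partition[OF assms] x] by simp
  moreover have "x \<in> X"
    using cell_subset[OF invlim_in_partition[OF assms]] x by blast
  ultimately show ?thesis
    using cell_Suc_subset by simp
qed

lemma invlim_subset:
  assumes "y \<in> invlim X f U" "n \<le> m"
  shows "y m i \<subseteq> y n i"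
  using assms(2)
proof (induction m rule: dec_induct)
  case (step m)
  then show ?case
    using invlim_Suc_subset[OF assms(1), of m i] by blast
qed simp

lemma theta_injective: "inj_on (theta f U) X"
proof (rule inj_onI, rule ccontr)
  fix x y
  assume xy: "x \<in> X" "y \<in> X" "theta f U x = theta f U y" "x \<noteq> y"
  have "x \<in> mball x (d x y)"
    using xy by simp
  then obtain n where n: "cell (U n) x \<subseteq> mball x (d x y)"
    by (rule cell_subset_open[OF openin_mball])
  have "cell (U n) x = cell (U n) y"
    using fun_cong[OF fun_cong[OF xy(3), of n], of 0] by (simp add: theta_def)
  then have "y \<in> mball x (d x y)"
    using n mem_cell[OF xy(2), of n] by blast
  then show False
    by simp
qed

abbreviation theta_inv :: "(nat \<Rightarrow> nat \<Rightarrow> 'a set) \<Rightarrow> 'a"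
  where "theta_inv \<equiv> inv_into X (theta f U)"

lemma theta_inv_theta: "x \<in> X \<Longrightarrow> theta_inv (theta f U x) = x"
  using theta_injective by (rule inv_into_f_f)

lemma theta_eq_if_mem_cells:
  assumes y: "y \<in> invlim X f U" and x: "\<And>n. x \<in> y n 0"
  shows "theta f U x = y"
proof -
  have "x \<in> X"
    using cell_subset[OF invlim_in_partition[OF y]] x by blast
  have orbit: "(f ^^ i) x \<in> y m i" for m i
  proof -
    define V where "V = cell (U m) ((f ^^ i) x)"
    have "V \<in> U m"
      unfolding V_def using \<open>x \<in> X\<close> by (intro cell_in_partition funpow_in_X)
    then have V: "V \<in> U m" "openin mtopology V"
      using openin_cell by auto
    have "x \<in> {z \<in> topspace mtopology. (f ^^ i) z \<in> V}"
      using \<open>x \<in> X\<close> funpow_in_X mem_cell by (simp add: V_def)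
    then obtain n where n: "cell (U n) x \<subseteq> {z \<in> topspace mtopology. (f ^^ i) z \<in> V}"
      by (rule cell_subset_open[OF openin_continuous_map_preimage[OF continuous_funpow V(2)]])
    \<comment> \<open>An orbit realising the first i + 1 coordinates of y at level max n m starts in
      cell (U n) x, so its i-th point lies in V as well as in y m i.\<close>
    obtain x' where x'_orbit: "\<And>j. j \<le> i \<Longrightarrow> (f ^^ j) x' \<in> y (max n m) j"
      by (rule invlim_orbit[OF y, where k = i and n = "max n m"]) blast
    have "cell (U n) x = y n 0"
      by (rule cell_eq[OF invlim_in_partition[OF y] x])
    then have "x' \<in> cell (U n) x"
      using x'_orbit[of 0] invlim_subset[OF y, of n "max n m" 0] by auto
    then have "(f ^^ i) x' \<in> V"
      using n by auto
    moreover have "(f ^^ i) x' \<in> y m i"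
      using x'_orbit[of i] invlim_subset[OF y, of m "max n m" i] by auto
    ultimately have "V = y m i"
      by (rule cells_eq_if_common_point[OF V(1) invlim_in_partition[OF y]])
    moreover have "(f ^^ i) x \<in> V"
      unfolding V_def by (rule mem_cell[OF funpow_in_X[OF \<open>x \<in> X\<close>]])
    ultimately show ?thesis
      by simp
  qed
  show ?thesis
    unfolding theta_def by (intro ext) (rule cell_eq[OF invlim_in_partition[OF y] orbit])
qed

lemma invlim_dist_theta_le:
  assumes "x \<in> X" "y \<in> X" "\<And>i. i \<le> N \<Longrightarrow> cell (U N) ((f ^^ i) x) = cell (U N) ((f ^^ i) y)"
  shows "invlim_dist (theta f U x) (theta f U y) \<le> 1 / (real N + 1)"
proof (rule invlim_dist_le)
  fix n
  let ?\<delta> = "orbdist (theta f U x n) (theta f U y n)"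
  show "?\<delta> / (real n + 1) \<le> 1 / (real N + 1)"
  proof (cases "n \<le> N")
    case True
    then have "theta f U x n i = theta f U y n i" if "i \<le> N" for i
      unfolding theta_def using assms funpow_in_X that
      by (intro cell_eq_if_finer_cell_eq[of _ _ n N]) auto
    then have "?\<delta> < 1 / (real N + 1)"
      unfolding orbdist_less_iff by blast
    moreover have "?\<delta> / (real n + 1) \<le> ?\<delta>"
      using orbdist_nonneg[of "theta f U x n" "theta f U y n"]
      by (simp add: divide_le_eq mult_le_cancel_left1)
    ultimately show ?thesis
      by linarith
  next
    case False
    then have "1 / (real n + 1) \<le> 1 / (real N + 1)"
      by (simp add: frac_le)
    moreover have "?\<delta> / (real n + 1) \<le> 1 / (real n + 1)"
      using orbdist_le_1 by (intro divide_right_mono) auto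
    ultimately show ?thesis
      by linarith
  qed
qed

lemma continuous_theta:
  "continuous_map mtopology (Metric_space.mtopology (invlim X f U) invlim_dist) (theta f U)"
  unfolding metric_continuous_map[OF Metric_space_invlim_dist]
proof (intro conjI ballI allI impI)
  show "theta f U ` X \<subseteq> invlim X f U"
    using theta_in_invlim by auto
next
  fix a and \<epsilon> :: real
  assume "a \<in> X" "0 < \<epsilon>"
  obtain N where N: "1 / (real N + 1) < \<epsilon>"
    using reals_Archimedean[OF \<open>0 < \<epsilon>\<close>] by (auto simp: inverse_eq_divide add.commute)
  define C where "C = (\<Inter>i\<in>{..N}. {x \<in> topspace mtopology. (f ^^ i) x \<in> cell (U N) ((f ^^ i) a)})
    \<inter> topspace mtopology"
  have "openin mtopology {x \<in> topspace mtopology. (f ^^ i) x \<in> cell (U N) ((f ^^ i) a)}" for i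
    using openin_continuous_map_preimage[OF continuous_funpow
        openin_cell[OF cell_in_partition[OF funpow_in_X[OF \<open>a \<in> X\<close>]]]] .
  then have "openin mtopology C"
    unfolding C_def by (intro openin_INT) auto
  moreover have "a \<in> C"
    using \<open>a \<in> X\<close> funpow_in_X mem_cell by (auto simp: C_def)
  ultimately obtain r where "r > 0" "mball a r \<subseteq> C"
    by (auto simp: openin_mtopology)
  moreover have "invlim_dist (theta f U a) (theta f U x) < \<epsilon>" if "x \<in> C" for x
  proof -
    have "x \<in> X" and orbit: "\<And>i. i \<le> N \<Longrightarrow> (f ^^ i) x \<in> cell (U N) ((f ^^ i) a)"
      using that by (auto simp: C_def)
    then have "cell (U N) ((f ^^ i) a) = cell (U N) ((f ^^ i) x)" if "i \<le> N" for i
      using cell_eq[OF cell_in_partition[OF funpow_in_X[OF \<open>a \<in> X\<close>]] orbit[OF that]] by simp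
    then have "invlim_dist (theta f U a) (theta f U x) \<le> 1 / (real N + 1)"
      using \<open>a \<in> X\<close> \<open>x \<in> X\<close> by (intro invlim_dist_theta_le)
    then show ?thesis
      using N by linarith
  qed
  ultimately show "\<exists>\<delta>>0. \<forall>x. x \<in> X \<and> d a x < \<delta>
      \<longrightarrow> invlim_dist (theta f U a) (theta f U x) < \<epsilon>"
    using \<open>a \<in> X\<close> by (intro exI[of _ r]) auto
qed

end

locale complete_defseq_system = defseq_system +
  assumes complete: "complete_defseq U"
begin

lemma theta_surjective: "theta f U ` X = invlim X f U"
proof
  show "theta f U ` X \<subseteq> invlim X f U"
    using theta_in_invlim by auto
next
  show "invlim X f U \<subseteq> theta f U ` X"
  proof
    fix y
    assume y: "y \<in> invlim X f U"
    have "(\<Inter>n. y n 0) \<noteq> {}"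
      using complete[unfolded complete_defseq_def, rule_format, of "\<lambda>n. y n 0"]
        invlim_in_partition[OF y] invlim_Suc_subset[OF y] by blast
    then obtain x where x: "\<And>n. x \<in> y n 0"
      by auto
    then have "x \<in> X"
      using cell_subset[OF invlim_in_partition[OF y]] by blast
    moreover have "theta f U x = y"
      using theta_eq_if_mem_cells[OF y x] .
    ultimately show "y \<in> theta f U ` X"
      by blast
  qed
qed

lemma theta_inv_in_X: "y \<in> invlim X f U \<Longrightarrow> theta_inv y \<in> X"
  by (rule inv_into_into) (simp add: theta_surjective)

lemma theta_theta_inv: "y \<in> invlim X f U \<Longrightarrow> theta f U (theta_inv y) = y"
  by (rule f_inv_into_f) (simp add: theta_surjective)

lemma theta_inv_mem:
  assumes "y \<in> invlim X f U"
  shows "theta_inv y \<in> y n 0"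
proof -
  have "y n 0 = theta f U (theta_inv y) n 0"
    using theta_theta_inv[OF assms] by simp
  also have "\<dots> = cell (U n) (theta_inv y)"
    by (simp add: theta_def)
  finally show ?thesis
    using mem_cell[OF theta_inv_in_X[OF assms]] by simp
qed

lemma continuous_theta_inv:
  "continuous_map (Metric_space.mtopology (invlim X f U) invlim_dist) mtopology theta_inv"
  unfolding Metric_space.metric_continuous_map[OF Metric_space_invlim_dist Metric_space_axioms]
proof (intro conjI ballI allI impI)
  show "theta_inv ` invlim X f U \<subseteq> X"
    using theta_inv_in_X by auto
next
  fix a and \<epsilon> :: real
  assume a: "a \<in> invlim X f U" and "0 < \<epsilon>"
  have "theta_inv a \<in> mball (theta_inv a) \<epsilon>"
    using theta_inv_in_X[OF a] \<open>0 < \<epsilon>\<close> by simp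
  then obtain n where n: "cell (U n) (theta_inv a) \<subseteq> mball (theta_inv a) \<epsilon>"
    by (rule cell_subset_open[OF openin_mball])
  have "d (theta_inv a) (theta_inv z) < \<epsilon>"
    if "z \<in> invlim X f U" "invlim_dist a z < 1 / (real n + 1)" for z
  proof -
    have "theta_inv z \<in> a n 0"
      using invlim_dist_less_imp_eq[OF that(2)] theta_inv_mem[OF that(1)] by simp
    moreover have "a n 0 = cell (U n) (theta_inv a)"
      using cell_eq[OF invlim_in_partition[OF a] theta_inv_mem[OF a]] by simp
    ultimately have "theta_inv z \<in> cell (U n) (theta_inv a)"
      by simp
    then show ?thesis
      using n by auto
  qed
  then show "\<exists>\<delta>>0. \<forall>z. z \<in> invlim X f U \<and> invlim_dist a z < \<delta>
      \<longrightarrow> d (theta_inv a) (theta_inv z) < \<epsilon>"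
    by (intro exI[of _ "1 / (real n + 1)"]) auto
qed

lemma theta_homeomorphic_map:
  "homeomorphic_map mtopology (Metric_space.mtopology (invlim X f U) invlim_dist) (theta f U)"
  unfolding homeomorphic_map_maps homeomorphic_maps_def
    Metric_space.topspace_mtopology[OF Metric_space_invlim_dist] topspace_mtopology
  using continuous_theta continuous_theta_inv theta_inv_theta theta_theta_inv
  by (intro exI[of _ theta_inv] conjI ballI) auto

end

section \<open>Uniform continuity\<close>

lemma funpow_uniformly_continuous_map:
  assumes "uniformly_continuous_map m m f"
  shows "uniformly_continuous_map m m (f ^^ i)"
proof (induction i)
  case (Suc i)
  then show ?case
    unfolding funpow.simps(2) using assms by (rule uniformly_continuous_map_compose)
qed (simp add: id_def)

lemma dist_le_Sup_mdiam:
  assumes "W \<in> P" "x \<in> W" "y \<in> W"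
  shows "ereal (d x y) \<le> Sup (mdiam d ` P)"
proof -
  have "ereal (d x y) \<le> mdiam d W"
    unfolding mdiam_def by (rule Sup_upper) (use assms in blast)
  also have "\<dots> \<le> Sup (mdiam d ` P)"
    using assms(1) by (rule SUP_upper)
  finally show ?thesis .
qed

context defseq_system
begin

lemma uniform_cell_agreement:
  assumes "uniformly_continuous_map (metric (X, d)) (metric (X, d)) f" and "\<rho> > 0"
    and separated: "\<forall>W\<in>U N. \<forall>W'\<in>U N. W \<noteq> W' \<longrightarrow> (\<forall>x\<in>W. \<forall>y\<in>W'. \<rho> \<le> d x y)"
  obtains \<delta> where "\<delta> > 0"
    "\<And>x y i. x \<in> X \<Longrightarrow> y \<in> X \<Longrightarrow> d y x < \<delta> \<Longrightarrow> i \<le> N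
      \<Longrightarrow> cell (U N) ((f ^^ i) y) = cell (U N) ((f ^^ i) x)"
proof -
  have funpow_uc: "\<forall>i. \<exists>\<delta>>0. \<forall>x\<in>X. \<forall>y\<in>X. d y x < \<delta> \<longrightarrow> d ((f ^^ i) y) ((f ^^ i) x) < \<rho>"
    using funpow_uniformly_continuous_map[OF assms(1)] \<open>\<rho> > 0\<close>
    by (simp add: uniformly_continuous_map_def)
  obtain \<delta> where \<delta>: "\<And>i. \<delta> i > 0"
    "\<And>i x y. x \<in> X \<Longrightarrow> y \<in> X \<Longrightarrow> d y x < \<delta> i \<Longrightarrow> d ((f ^^ i) y) ((f ^^ i) x) < \<rho>"
    using choice[OF funpow_uc] by blast
  have "cell (U N) ((f ^^ i) y) = cell (U N) ((f ^^ i) x)"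
    if "x \<in> X" "y \<in> X" "d y x < Min (\<delta> ` {..N})" "i \<le> N" for x y i
  proof (rule ccontr)
    assume "cell (U N) ((f ^^ i) y) \<noteq> cell (U N) ((f ^^ i) x)"
    moreover have "(f ^^ i) x \<in> X" "(f ^^ i) y \<in> X"
      using funpow_in_X that(1,2) by auto
    ultimately have "\<rho> \<le> d ((f ^^ i) y) ((f ^^ i) x)"
      using separated[rule_format, OF cell_in_partition cell_in_partition _ mem_cell mem_cell] by blast
    moreover have "Min (\<delta> ` {..N}) \<le> \<delta> i"
      using that(4) by (intro Min_le) auto
    ultimately show False
      using \<delta>(2)[OF that(1,2), of i] that(3) by linarith
  qed
  moreover have "Min (\<delta> ` {..N}) > 0"
    using \<delta>(1) by (simp add: Min_gr_iff)
  ultimately show ?thesis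
    using that[of "Min (\<delta> ` {..N})"] by blast
qed

lemma uniformly_continuous_theta:
  assumes separated: "\<And>n. \<exists>\<rho>>0. \<forall>W\<in>U n. \<forall>W'\<in>U n. W \<noteq> W'
      \<longrightarrow> (\<forall>x\<in>W. \<forall>y\<in>W'. \<rho> \<le> d x y)"
    and uc_f: "uniformly_continuous_map (metric (X, d)) (metric (X, d)) f"
  shows "uniformly_continuous_map (metric (X, d)) (metric (invlim X f U, invlim_dist)) (theta f U)"
  unfolding uniformly_continuous_map_def Metric_space.mspace_metric[OF Metric_space_invlim_dist]
    Metric_space.mdist_metric[OF Metric_space_invlim_dist] mspace_metric mdist_metric
proof (intro conjI allI impI)
  show "theta f U \<in> X \<rightarrow> invlim X f U"
    using theta_in_invlim by auto
next
  fix \<epsilon> :: real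
  assume "0 < \<epsilon>"
  obtain N where N: "1 / (real N + 1) < \<epsilon>"
    using reals_Archimedean[OF \<open>0 < \<epsilon>\<close>] by (auto simp: inverse_eq_divide add.commute)
  obtain \<rho> where \<rho>: "\<rho> > 0"
    "\<forall>W\<in>U N. \<forall>W'\<in>U N. W \<noteq> W' \<longrightarrow> (\<forall>x\<in>W. \<forall>y\<in>W'. \<rho> \<le> d x y)"
    using separated[of N] by blast
  obtain \<delta> where "\<delta> > 0" and agree: "\<And>x y i. x \<in> X \<Longrightarrow> y \<in> X \<Longrightarrow> d y x < \<delta> \<Longrightarrow> i \<le> N
      \<Longrightarrow> cell (U N) ((f ^^ i) y) = cell (U N) ((f ^^ i) x)"
    by (rule uniform_cell_agreement[OF uc_f \<rho>]) blast
  have "invlim_dist (theta f U y) (theta f U x) < \<epsilon>"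
    if "x \<in> X" "y \<in> X" "d y x < \<delta>" for x y
  proof -
    have "invlim_dist (theta f U y) (theta f U x) \<le> 1 / (real N + 1)"
      using that agree by (intro invlim_dist_theta_le) auto
    then show ?thesis
      using N by linarith
  qed
  then show "\<exists>\<delta>>0. \<forall>x\<in>X. \<forall>y\<in>X. d y x < \<delta>
      \<longrightarrow> invlim_dist (theta f U y) (theta f U x) < \<epsilon>"
    using \<open>\<delta> > 0\<close> by blast
qed

end

context complete_defseq_system
begin

lemma uniformly_continuous_theta_inv:
  assumes "(\<lambda>n. Sup (mdiam d ` U n)) \<longlonglongrightarrow> 0"
  shows "uniformly_continuous_map (metric (invlim X f U, invlim_dist)) (metric (X, d)) theta_inv"
  unfolding uniformly_continuous_map_def Metric_space.mspace_metric[OF Metric_space_invlim_dist]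
    Metric_space.mdist_metric[OF Metric_space_invlim_dist] mspace_metric mdist_metric
proof (intro conjI allI impI)
  show "theta_inv \<in> invlim X f U \<rightarrow> X"
    using theta_inv_in_X by auto
next
  fix \<epsilon> :: real
  assume "0 < \<epsilon>"
  then obtain n where n: "Sup (mdiam d ` U n) < ereal \<epsilon>"
    using order_tendstoD(2)[OF assms, of "ereal \<epsilon>"] by (auto simp: eventually_sequentially)
  have "d (theta_inv z') (theta_inv z) < \<epsilon>"
    if "z \<in> invlim X f U" "z' \<in> invlim X f U" "invlim_dist z' z < 1 / (real n + 1)" for z z'
  proof -
    have "theta_inv z \<in> z' n 0"
      using invlim_dist_less_imp_eq[OF that(3)] theta_inv_mem[OF that(1)] by simp
    then have "ereal (d (theta_inv z') (theta_inv z)) \<le> Sup (mdiam d ` U n)"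
      by (rule dist_le_Sup_mdiam[OF invlim_in_partition[OF that(2)] theta_inv_mem[OF that(2)]])
    then have "ereal (d (theta_inv z') (theta_inv z)) < ereal \<epsilon>"
      using n by (rule order.strict_trans1)
    then show ?thesis
      by simp
  qed
  then show "\<exists>\<delta>>0. \<forall>z\<in>invlim X f U. \<forall>z'\<in>invlim X f U. invlim_dist z' z < \<delta>
      \<longrightarrow> d (theta_inv z') (theta_inv z) < \<epsilon>"
    by (intro exI[of _ "1 / (real n + 1)"]) auto
qed

lemma uniformly_continuous_f_if_theta:
  assumes "uniformly_continuous_map (metric (X, d)) (metric (invlim X f U, invlim_dist)) (theta f U)"
    and "uniformly_continuous_map (metric (invlim X f U, invlim_dist)) (metric (X, d)) theta_inv"
  shows "uniformly_continuous_map (metric (X, d)) (metric (X, d)) f"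
proof -
  define shift :: "(nat \<Rightarrow> nat \<Rightarrow> 'a set) \<Rightarrow> nat \<Rightarrow> nat \<Rightarrow> 'a set"
    where "shift y = (\<lambda>n i. y n (Suc i))" for y
  have theta_f: "theta f U (f x) = shift (theta f U x)" for x
    by (simp add: shift_def theta_def funpow_swap1)
  have "shift y \<in> invlim X f U" if "y \<in> invlim X f U" for y
  proof -
    have "y \<in> theta f U ` X"
      using that theta_surjective by simp
    then obtain x where "x \<in> X" "y = theta f U x"
      by blast
    then show ?thesis
      using theta_f[of x] theta_in_invlim[of "f x"] funpow_in_X[of x 1] by simp
  qed
  then have "shift \<in> invlim X f U \<rightarrow> invlim X f U"
    by blast
  moreover have "invlim_dist (shift y) (shift z) \<le> 2 * invlim_dist y z" for y z
    unfolding shift_def by (rule invlim_dist_shift_le)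
  ultimately have "Lipschitz_continuous_map (metric (invlim X f U, invlim_dist))
      (metric (invlim X f U, invlim_dist)) shift"
    unfolding Lipschitz_continuous_map_def Metric_space.mspace_metric[OF Metric_space_invlim_dist]
      Metric_space.mdist_metric[OF Metric_space_invlim_dist]
    by (intro conjI exI[of _ 2]) auto
  then have "uniformly_continuous_map (metric (invlim X f U, invlim_dist))
      (metric (invlim X f U, invlim_dist)) shift"
    by (rule Lipschitz_imp_uniformly_continuous_map)
  then have "uniformly_continuous_map (metric (X, d)) (metric (X, d))
      (theta_inv \<circ> (shift \<circ> theta f U))"
    using uniformly_continuous_map_compose[OF uniformly_continuous_map_compose[OF assms(1)] assms(2)]
    by blast
  moreover have "(theta_inv \<circ> (shift \<circ> theta f U)) x = f x" if "x \<in> X" for x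
    using theta_f[of x, symmetric] theta_inv_theta[of "f x"] funpow_in_X[OF that, of 1] by simp
  ultimately show ?thesis
    by (rule uniformly_continuous_map_eq[rotated]) simp
qed

end

theorem proposition4p12:
  fixes X :: "'a set" and d :: "'a \<Rightarrow> 'a \<Rightarrow> real" and f :: "'a \<Rightarrow> 'a"
    and U :: "nat \<Rightarrow> 'a set set"
  assumes "Metric_space X d"
    and "X \<noteq> {}"
    and "separable_space (Metric_space.mtopology X d)"
    and "continuous_map (Metric_space.mtopology X d) (Metric_space.mtopology X d) f"
    and "defining_sequence X d U"
  shows "(complete_defseq U \<longrightarrow>
            homeomorphic_map (Metric_space.mtopology X d)
              (Metric_space.mtopology (invlim X f U) invlim_dist) (theta f U))
       \<and> (complete_defseq U \<and> tame_defseq d U \<longrightarrow>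
            (uniformly_continuous_map (metric (X, d)) (metric (X, d)) f \<longleftrightarrow>
               uniformly_continuous_map (metric (X, d)) (metric (invlim X f U, invlim_dist)) (theta f U)
             \<and> uniformly_continuous_map (metric (invlim X f U, invlim_dist)) (metric (X, d))
                 (inv_into X (theta f U))))"
proof -
  interpret defseq_system X d f U
    using assms(1,4,5) by (simp add: defseq_system_def defseq_system_axioms_def)
  show ?thesis
  proof (intro conjI impI)
    assume "complete_defseq U"
    then interpret complete_defseq_system X d f U
      by unfold_locales
    show "homeomorphic_map mtopology (Metric_space.mtopology (invlim X f U) invlim_dist) (theta f U)"
      by (rule theta_homeomorphic_map)
  next
    assume complete_tame: "complete_defseq U \<and> tame_defseq d U"
    then interpret complete_defseq_system X d f U
      by unfold_locales blast
    have diam: "(\<lambda>n. Sup (mdiam d ` U n)) \<longlonglongrightarrow> 0"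
      and separated: "\<And>n. \<exists>\<rho>>0. \<forall>W\<in>U n. \<forall>W'\<in>U n. W \<noteq> W'
        \<longrightarrow> (\<forall>x\<in>W. \<forall>y\<in>W'. \<rho> \<le> d x y)"
      using complete_tame unfolding tame_defseq_def by blast+
    show "uniformly_continuous_map (metric (X, d)) (metric (X, d)) f \<longleftrightarrow>
        uniformly_continuous_map (metric (X, d)) (metric (invlim X f U, invlim_dist)) (theta f U)
      \<and> uniformly_continuous_map (metric (invlim X f U, invlim_dist)) (metric (X, d)) theta_inv"
      using uniformly_continuous_theta[OF separated] uniformly_continuous_theta_inv[OF diam]
        uniformly_continuous_f_if_theta by blast
  qed
qed

end
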